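(* Let $f\in\mathbb{Z}[X]$ be a monic polynomial irreducible over $\mathbb{Q}$. Then every Vandermonde cut-and-project scheme corresponding to $f$ is generic.
   Context: Let $f$ have degree $d$ and (distinct) roots $\beta_1,\dots,\beta_d$, and set $\mathbf{z}_j=(1,\beta_j,\beta_j^2,\dots,\beta_j^{d-1})^\top$. The elementary real subspaces are $\mathrm{span}_\mathbb{R}\{\mathbf{z}_j\}$ for real $\beta_j$ and $\mathrm{span}_\mathbb{R}\{\mathrm{Re}\,\mathbf{z}_j,\mathrm{Im}\,\mathbf{z}_j\}$ for non-real $\beta_j$ (real and imaginary parts taken componentwise). A Vandermonde cut-and-project scheme corresponding to $f$ is obtained as follows: write $\mathbb{R}^d=\mathcal{Y}_1\oplus\mathcal{Y}_2$ where each $\mathcal{Y}_i$ is a direct sum of some of the elementary subspaces, $\dim\mathcal{Y}_1=n$, $1\le n<d$; let $Y_1\in\mathbb{R}^{d\times n}$, $Y_2\in\mathbb{R}^{d\times(d-n)}$ be matrices whose columns are the corresponding vectors $\mathbf{z}_j$ or pairs $\mathrm{Re}\,\mathbf{z}_j,\mathrm{Im}\,\mathbf{z}_j$ spanning $\mathcal{Y}_1$, $\mathcal{Y}_2$; set $Y=(Y_1,Y_2)$, $L=Y^{-1}$ and $\mathcal{L}=\{L\mathbf{r}:\mathbf{r}\in\mathbb{Z}^d\}$. The scheme is $(\mathcal{L}\subset\mathbb{R}^d,\mathbb{R}^n)$ with projections $\pi_\parallel(\mathbf{x})=(x_1,\dots,x_n)^\top$, $\pi_\perp(\mathbf{x})=(x_{n+1},\dots,x_d)^\top$.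 Such a scheme is generic if $\pi_\parallel|_{\mathcal{L}}$ and $\pi_\perp|_{\mathcal{L}}$ are injective and $\pi_\perp(\mathcal{L})$ is dense in $\mathbb{R}^{d-n}$. *)

theory Defs
  imports Complex_Main "HOL-Computational_Algebra.Polynomial"
begin

text \<open>Column data of a Vandermonde matrix Y = (Y1, Y2) for f with dim Y1 = n.
  Column k (k < degree f) is Re(z(col k)) if part k is False, and Im(z(col k)) if part k is True,
  where z(b) = (1, b, ..., b^(d-1)).\<close>
definition vdm_columns :: "int poly \<Rightarrow> nat \<Rightarrow> (nat \<Rightarrow> complex) \<Rightarrow> (nat \<Rightarrow> bool) \<Rightarrow> bool" where
  "vdm_columns f n col part \<longleftrightarrow>
     (\<forall>k < degree f. poly (map_poly complex_of_int f) (col k) = 0) \<and>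
     (\<forall>\<gamma>. poly (map_poly complex_of_int f) \<gamma> = 0 \<longrightarrow> Im \<gamma> = 0 \<longrightarrow>
        card {k. k < degree f \<and> col k = \<gamma>} = 1 \<and>
        (\<forall>k < degree f. col k = \<gamma> \<longrightarrow> \<not> part k)) \<and>
     (\<forall>\<gamma>. poly (map_poly complex_of_int f) \<gamma> = 0 \<longrightarrow> Im \<gamma> \<noteq> 0 \<longrightarrow>
        (\<exists>k1 k2. k1 < degree f \<and> k2 < degree f \<and> k1 \<noteq> k2 \<and>
           {k. k < degree f \<and> (col k = \<gamma> \<or> col k = cnj \<gamma>)} = {k1, k2} \<and>
           col k1 = col k2 \<and> part k1 \<noteq> part k2 \<and> (k1 < n \<longleftrightarrow> k2 < n)))"

definition vdm_matrix :: "(nat \<Rightarrow> complex) \<Rightarrow> (nat \<Rightarrow> bool) \<Rightarrow> nat \<Rightarrow> nat \<Rightarrow> real" where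
  "vdm_matrix col part i k = (if part k then Im (col k ^ i) else Re (col k ^ i))"

text \<open>The lattice L Z^d, vectors of R^d as functions nat => real vanishing from index d on.\<close>
definition cps_lattice :: "nat \<Rightarrow> (nat \<Rightarrow> nat \<Rightarrow> real) \<Rightarrow> (nat \<Rightarrow> real) set" where
  "cps_lattice d L = {x. \<exists>r :: nat \<Rightarrow> int.
      x = (\<lambda>i. if i < d then (\<Sum>k<d. L i k * of_int (r k)) else 0)}"

definition pi_par :: "nat \<Rightarrow> (nat \<Rightarrow> real) \<Rightarrow> (nat \<Rightarrow> real)" where
  "pi_par n x = (\<lambda>i. if i < n then x i else 0)"

definition pi_perp :: "nat \<Rightarrow> nat \<Rightarrow> (nat \<Rightarrow> real) \<Rightarrow> (nat \<Rightarrow> real)" where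
  "pi_perp d n x = (\<lambda>i. if i < d - n then x (n + i) else 0)"

definition generic_cps :: "nat \<Rightarrow> nat \<Rightarrow> (nat \<Rightarrow> nat \<Rightarrow> real) \<Rightarrow> bool" where
  "generic_cps d n L \<longleftrightarrow>
     inj_on (pi_par n) (cps_lattice d L) \<and>
     inj_on (pi_perp d n) (cps_lattice d L) \<and>
     (\<forall>y :: nat \<Rightarrow> real. \<forall>\<epsilon> > 0. \<exists>x \<in> cps_lattice d L.
        sqrt (\<Sum>i < d - n. (pi_perp d n x i - y i)^2) < \<epsilon>)"

end

theory Submission
  imports Defs "HOL-Analysis.Analysis"
    "HOL-Computational_Algebra.Polynomial_Factorial" "HOL-Computational_Algebra.Field_as_Ring"
begin

text \<open>
  For a root beta of f, the coefficients of the quotient f(X) / (X - beta) form a vector orthogonal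
  to z_gamma for every other root gamma; up to the factor f'(beta) it is the row of the inverse of
  the complex Vandermonde matrix belonging to beta. If two lattice points L r, L r' have the same
  image under one of the projections, then sigma = r - r' is an integer vector with
  sigma = Y (L sigma), a real combination of the columns of the other block only. Pairing sigma
  with the quotient for a root beta of the first block gives zero; the pairing is an integer
  polynomial of degree less than deg f evaluated at beta, so irreducibility makes all its
  coefficients vanish, and since these coefficients depend on sigma through a triangular system
  with diagonal lead_coeff f, sigma = 0.

  For density, the numbers Re (beta^i) + s Im (beta^i) are linearly independent over the
  integers for all but countably many real s, and this vector is Y a for some a supported on the
  first block. Kronecker's theorem approximates any target modulo Z^d by real multiples of it,
  and applying L turns this into lattice points whose second block approximates any given y.
\<close>

lemma poly_map_poly_of_rat_add:
  "poly (map_poly of_rat (p + q)) (x :: 'a :: field_char_0) =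
     poly (map_poly of_rat p) x + poly (map_poly of_rat q) x"
proof -
  have "map_poly (of_rat :: rat \<Rightarrow> 'a) (p + q) = map_poly of_rat p + map_poly of_rat q"
    by (rule poly_eqI) (simp add: coeff_map_poly of_rat_add)
  then show ?thesis by simp
qed

lemma poly_map_poly_of_rat_mult:
  "poly (map_poly of_rat (p * q)) (x :: 'a :: field_char_0) =
     poly (map_poly of_rat p) x * poly (map_poly of_rat q) x"
proof -
  have "map_poly (of_rat :: rat \<Rightarrow> 'a) (p * q) = map_poly of_rat p * map_poly of_rat q"
    by (rule poly_eqI) (simp add: coeff_map_poly coeff_mult of_rat_sum of_rat_mult)
  then show ?thesis by simp
qed

lemma irreducible_dvd_if_common_root:
  fixes p q :: "rat poly" and x :: "'a :: field_char_0"
  assumes "irreducible p"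
    and "poly (map_poly of_rat p) x = 0" and "poly (map_poly of_rat q) x = 0"
  shows "p dvd q"
proof -
  define g where "g = gcd p q"
  have "\<not> is_unit g"
  proof
    assume "is_unit g"
    then obtain c where c: "g = [:c:]" "is_unit c"
      by (auto simp: is_unit_poly_iff)
    obtain a b where "a * p + b * q = g"
      using bezout_coefficients_fst_snd unfolding g_def by blast
    then have "poly (map_poly of_rat g) x = 0"
      using assms(2,3) by (metis poly_map_poly_of_rat_add poly_map_poly_of_rat_mult mult_zero_right add_0)
    then show False using c by (auto simp: map_poly_pCons)
  qed
  moreover have "g dvd p" unfolding g_def by simp
  ultimately have "p dvd g"
    using assms(1) irreducibleD' by blast
  then show ?thesis unfolding g_def by (meson dvd_trans gcd_dvd2)
qed

definition int_independent :: "nat \<Rightarrow> (nat \<Rightarrow> 'a :: ring_1) \<Rightarrow> bool" where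
  "int_independent m \<theta> \<longleftrightarrow>
     (\<forall>q :: nat \<Rightarrow> int. (\<Sum>i<m. of_int (q i) * \<theta> i) = 0 \<longrightarrow> (\<forall>i<m. q i = 0))"

lemma int_independent_powers_of_root:
  fixes f :: "int poly" and x :: "'a :: field_char_0"
  assumes irr: "irreducible (map_poly (of_int :: int \<Rightarrow> rat) f)"
    and root: "poly (map_poly of_int f) x = 0"
  shows "int_independent (degree f) (\<lambda>j. x ^ j)"
  unfolding int_independent_def
proof (rule allI, rule impI)
  fix a :: "nat \<Rightarrow> int"
  assume sum0: "(\<Sum>j<degree f. of_int (a j) * x ^ j) = 0"
  define p :: "rat poly" where "p = (\<Sum>j<degree f. monom (of_int (a j)) j)"
  have coeff_p: "coeff p j = (if j < degree f then of_int (a j) else 0)" for j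
    unfolding p_def by (simp add: coeff_sum coeff_monom)
  have "map_poly (of_rat :: rat \<Rightarrow> 'a) p = (\<Sum>j<degree f. monom (of_int (a j)) j)"
    by (rule poly_eqI) (simp add: coeff_map_poly coeff_p coeff_sum coeff_monom)
  moreover have "map_poly (of_rat :: rat \<Rightarrow> 'a) (map_poly of_int f) = map_poly of_int f"
    by (simp add: map_poly_map_poly o_def)
  ultimately have dvd: "map_poly of_int f dvd p"
    using irr root sum0
    by (intro irreducible_dvd_if_common_root[of _ x]) (simp_all add: poly_sum poly_monom)
  have "p = 0"
  proof (rule ccontr)
    assume "p \<noteq> 0"
    then have "degree f > 0" unfolding p_def by (cases "degree f") auto
    moreover have "degree p \<le> degree f - 1" by (rule degree_le) (auto simp: coeff_p)
    moreover have "degree (map_poly (of_int :: int \<Rightarrow> rat) f) \<le> degree p"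
      using dvd \<open>p \<noteq> 0\<close> by (rule dvd_imp_degree_le)
    ultimately show False by (simp add: degree_map_poly)
  qed
  then show "\<forall>j<degree f. a j = 0" using coeff_p by (metis of_int_eq_0_iff coeff_0)
qed

lemma coeff_synthetic_div:
  fixes p :: "'a :: comm_semiring_1 poly"
  shows "coeff (synthetic_div p c) i = (\<Sum>j<degree p - i. coeff p (i + 1 + j) * c ^ j)"
proof (induction p arbitrary: i)
  case 0
  then show ?case by simp
next
  case (pCons a p)
  show ?case
  proof (cases "p = 0")
    case True
    then show ?thesis by simp
  next
    case False
    then have deg: "degree (pCons a p) = Suc (degree p)" by simp
    show ?thesis
    proof (cases i)
      case 0
      then show ?thesis by (simp add: deg poly_altdef lessThan_Suc_atMost mult.commute)
    next
      case (Suc k)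
      then show ?thesis by (simp add: deg pCons.IH)
    qed
  qed
qed

lemma poly_synthetic_div_eq_sum:
  fixes p :: "'a :: comm_semiring_1 poly"
  shows "poly (synthetic_div p c) x = (\<Sum>i<degree p. coeff (synthetic_div p c) i * x ^ i)"
proof (cases "degree p = 0")
  case True
  then have "synthetic_div p c = 0" by (simp add: synthetic_div_eq_0_iff)
  with True show ?thesis by simp
next
  case False
  then have "{..degree (synthetic_div p c)} = {..<degree p}"
    by (auto simp: degree_synthetic_div)
  then show ?thesis by (simp add: poly_altdef)
qed

lemma poly_synthetic_div_at_other_root:
  fixes p :: "'a :: idom poly"
  assumes "poly p x = 0" and "poly p c = 0" and "x \<noteq> c"
  shows "poly (synthetic_div p c) x = 0"
proof -
  have "(x - c) * poly (synthetic_div p c) x = poly p x - poly p c"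
    using arg_cong[OF synthetic_div_correct'[of c p], of "\<lambda>q. poly q x"] by (simp add: algebra_simps)
  then show ?thesis using assms by simp
qed

lemma sum_triangle_swap:
  fixes F :: "nat \<Rightarrow> nat \<Rightarrow> 'a :: comm_monoid_add"
  shows "(\<Sum>i<d. \<Sum>j<d - i. F i j) = (\<Sum>j<d. \<Sum>i<d - j. F i j)"
proof -
  have "(\<Sum>i<d. \<Sum>j<d - i. F i j) = (\<Sum>i<d. \<Sum>j<d. if i + j < d then F i j else 0)"
    by (rule sum.cong[OF refl], rule sum.mono_neutral_cong_left) auto
  also have "\<dots> = (\<Sum>j<d. \<Sum>i<d. if i + j < d then F i j else 0)"
    by (rule sum.swap)
  also have "\<dots> = (\<Sum>j<d. \<Sum>i<d - j. F i j)"
    by (rule sum.cong[OF refl], rule sum.mono_neutral_cong_right) auto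
  finally show ?thesis .
qed

lemma shifted_coeff_sums_eq_0_imp_eq_0:
  fixes f :: "'a :: idom poly" and \<sigma> :: "nat \<Rightarrow> 'a"
  assumes "f \<noteq> 0"
    and sums: "\<forall>j<degree f. (\<Sum>i<degree f - j. \<sigma> i * coeff f (i + 1 + j)) = 0"
  shows "\<forall>i<degree f. \<sigma> i = 0"
proof (intro allI impI)
  fix i assume "i < degree f"
  then show "\<sigma> i = 0"
  proof (induction i rule: less_induct)
    case (less i)
    define j where "j = degree f - 1 - i"
    have "j < degree f" "degree f - j = Suc i" "i + 1 + j = degree f"
      using less.prems unfolding j_def by auto
    moreover have "(\<Sum>k<i. \<sigma> k * coeff f (k + 1 + j)) = 0"
      using less by (intro sum.neutral) auto
    ultimately have "\<sigma> i * lead_coeff f = 0"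
      using sums by (metis add.left_neutral sum.lessThan_Suc)
    then show ?case using \<open>f \<noteq> 0\<close> by simp
  qed
qed

lemma int_vector_eq_0_if_orthogonal_to_synthetic_div:
  fixes f :: "int poly" and x :: "'a :: field_char_0" and \<sigma> :: "nat \<Rightarrow> int"
  assumes irr: "irreducible (map_poly (of_int :: int \<Rightarrow> rat) f)"
    and root: "poly (map_poly of_int f) x = 0"
    and orth: "(\<Sum>i<degree f. of_int (\<sigma> i) * coeff (synthetic_div (map_poly of_int f) x) i) = 0"
  shows "\<forall>i<degree f. \<sigma> i = 0"
proof -
  define a where "a j = (\<Sum>i<degree f - j. \<sigma> i * coeff f (i + 1 + j))" for j
  have deg: "degree (map_poly (of_int :: int \<Rightarrow> 'a) f) = degree f"
    by (rule degree_map_poly) simp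
  have "(\<Sum>i<degree f. of_int (\<sigma> i) * coeff (synthetic_div (map_poly of_int f) x) i)
      = (\<Sum>i<degree f. \<Sum>j<degree f - i. of_int (\<sigma> i * coeff f (i + 1 + j)) * x ^ j)"
    by (simp add: coeff_synthetic_div deg coeff_map_poly sum_distrib_left mult_ac)
  also have "\<dots> = (\<Sum>j<degree f. \<Sum>i<degree f - j. of_int (\<sigma> i * coeff f (i + 1 + j)) * x ^ j)"
    by (rule sum_triangle_swap)
  also have "\<dots> = (\<Sum>j<degree f. of_int (a j) * x ^ j)"
    by (simp add: a_def sum_distrib_right)
  finally have "(\<Sum>j<degree f. of_int (a j) * x ^ j) = 0"
    using orth by simp
  then have "\<forall>j<degree f. a j = 0"
    using int_independent_powers_of_root[OF irr root] unfolding int_independent_def by blast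
  moreover have "f \<noteq> 0"
    using irr by auto
  ultimately show ?thesis
    using shifted_coeff_sums_eq_0_imp_eq_0[of f \<sigma>] unfolding a_def by blast
qed

lemma of_real_vdm_matrix:
  fixes col :: "nat \<Rightarrow> complex" and part :: "nat \<Rightarrow> bool"
  shows "complex_of_real (vdm_matrix col part i k) =
     (if part k then (col k ^ i - cnj (col k) ^ i) / (2 * \<i>)
      else (col k ^ i + cnj (col k) ^ i) / 2)"
  unfolding vdm_matrix_def
  by (auto simp: complex_add_cnj complex_diff_cnj algebra_simps simp flip: complex_cnj_power)

lemma vdm_column_orthogonal_synthetic_div:
  fixes p :: "complex poly" and col :: "nat \<Rightarrow> complex" and part :: "nat \<Rightarrow> bool"
  assumes real: "\<And>k. coeff p k \<in> \<real>"
    and col_root: "poly p (col c) = 0" and root: "poly p \<beta> = 0"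
    and ne: "col c \<noteq> \<beta>" "cnj (col c) \<noteq> \<beta>"
  shows "(\<Sum>i<degree p. of_real (vdm_matrix col part i c) * coeff (synthetic_div p \<beta>) i) = 0"
proof -
  define S where "S x = (\<Sum>i<degree p. coeff (synthetic_div p \<beta>) i * x ^ i)" for x
  have "S (col c) = 0" "S (cnj (col c)) = 0"
    using col_root root ne real_poly_cnj_root_iff[OF real]
    by (simp_all add: S_def flip: poly_synthetic_div_eq_sum add: poly_synthetic_div_at_other_root)
  moreover have "(\<Sum>i<degree p. of_real (vdm_matrix col part i c) * coeff (synthetic_div p \<beta>) i) =
      (if part c then (S (col c) - S (cnj (col c))) / (2 * \<i>) else (S (col c) + S (cnj (col c))) / 2)"
    by (simp add: S_def of_real_vdm_matrix sum_divide_distrib sum_subtractf sum.distrib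
        algebra_simps diff_divide_distrib add_divide_distrib)
  ultimately show ?thesis by simp
qed

lemma int_vector_in_span_of_vdm_columns_eq_0:
  fixes f :: "int poly" and \<sigma> :: "nat \<Rightarrow> int" and u :: "nat \<Rightarrow> real"
    and col :: "nat \<Rightarrow> complex" and part :: "nat \<Rightarrow> bool"
  assumes irr: "irreducible (map_poly (of_int :: int \<Rightarrow> rat) f)"
    and root: "poly (map_poly of_int f) \<beta> = 0"
    and cols: "\<forall>c\<in>C. poly (map_poly of_int f) (col c) = 0 \<and> col c \<noteq> \<beta> \<and> cnj (col c) \<noteq> \<beta>"
    and span: "\<forall>i<degree f. of_int (\<sigma> i) = (\<Sum>c\<in>C. vdm_matrix col part i c * u c)"
  shows "\<forall>i<degree f. \<sigma> i = 0"
proof -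
  let ?p = "map_poly complex_of_int f"
  let ?q = "synthetic_div ?p \<beta>"
  have deg: "degree ?p = degree f"
    by (rule degree_map_poly) simp
  have span': "complex_of_int (\<sigma> i) = (\<Sum>c\<in>C. of_real (vdm_matrix col part i c) * of_real (u c))"
    if "i < degree f" for i
  proof -
    have "complex_of_int (\<sigma> i) = of_real (of_int (\<sigma> i))" by simp
    also have "\<dots> = of_real (\<Sum>c\<in>C. vdm_matrix col part i c * u c)" using span that by simp
    finally show ?thesis by (simp add: of_real_sum)
  qed
  have "(\<Sum>i<degree f. of_int (\<sigma> i) * coeff ?q i)
      = (\<Sum>c\<in>C. of_real (u c) * (\<Sum>i<degree ?p. of_real (vdm_matrix col part i c) * coeff ?q i))"
    using span'
    by (simp add: deg sum_distrib_left sum_distrib_right mult_ac sum.swap[of _ C])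
  also have "\<dots> = 0"
    using cols root
    by (intro sum.neutral ballI) (simp add: vdm_column_orthogonal_synthetic_div coeff_map_poly)
  finally show ?thesis
    using int_vector_eq_0_if_orthogonal_to_synthetic_div[OF irr root] by blast
qed

lemma matrix_inverse_apply:
  fixes A B :: "nat \<Rightarrow> nat \<Rightarrow> 'a :: comm_ring_1"
  assumes AB: "\<forall>i<d. \<forall>j<d. (\<Sum>k<d. A i k * B k j) = (if i = j then 1 else 0)" and "i < d"
  shows "(\<Sum>k<d. A i k * (\<Sum>l<d. B k l * v l)) = v i"
proof -
  have "(\<Sum>k<d. A i k * (\<Sum>l<d. B k l * v l)) = (\<Sum>k<d. \<Sum>l<d. A i k * B k l * v l)"
    by (simp add: sum_distrib_left mult.assoc)
  also have "\<dots> = (\<Sum>l<d. (\<Sum>k<d. A i k * B k l) * v l)"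
    by (subst sum.swap) (simp add: sum_distrib_right)
  also have "\<dots> = (\<Sum>l<d. if l = i then v l else 0)"
    using AB \<open>i < d\<close> by (intro sum.cong) auto
  finally show ?thesis using \<open>i < d\<close> by simp
qed

lemma vdm_columns_root:
  fixes col :: "nat \<Rightarrow> complex" and part :: "nat \<Rightarrow> bool"
  shows "vdm_columns f n col part \<Longrightarrow> k < degree f \<Longrightarrow> poly (map_poly of_int f) (col k) = 0"
  unfolding vdm_columns_def by blast

lemma vdm_columns_other_block:
  fixes col :: "nat \<Rightarrow> complex" and part :: "nat \<Rightarrow> bool"
  assumes vc: "vdm_columns f n col part" and "k < degree f" "c < degree f"
    and blocks: "(k < n) \<noteq> (c < n)"
  shows "col c \<noteq> col k \<and> col c \<noteq> cnj (col k)"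
proof -
  have root: "poly (map_poly of_int f) (col k) = 0"
    using vc \<open>k < degree f\<close> by (rule vdm_columns_root)
  note real_roots = conjunct1[OF conjunct2[OF vc[unfolded vdm_columns_def]]]
  note nonreal_roots = conjunct2[OF conjunct2[OF vc[unfolded vdm_columns_def]]]
  show ?thesis
  proof (cases "Im (col k) = 0")
    case True
    then have "cnj (col k) = col k" by (simp add: complex_eq_iff)
    moreover have "card {j. j < degree f \<and> col j = col k} = 1"
      using real_roots root True by blast
    then obtain j where singleton: "{j. j < degree f \<and> col j = col k} = {j}"
      by (rule card_1_singletonE)
    have "k \<in> {j. j < degree f \<and> col j = col k}"
      "col c = col k \<Longrightarrow> c \<in> {j. j < degree f \<and> col j = col k}"
      using \<open>k < degree f\<close> \<open>c < degree f\<close> by simp_all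
    then have "col c = col k \<Longrightarrow> c = k"
      unfolding singleton by simp
    ultimately show ?thesis using blocks by auto
  next
    case False
    then obtain k1 k2 where
      pair: "{j. j < degree f \<and> (col j = col k \<or> col j = cnj (col k))} = {k1, k2}"
      and "k1 < n \<longleftrightarrow> k2 < n"
      using nonreal_roots root by blast
    moreover have "k \<in> {k1, k2}"
      using \<open>k < degree f\<close> unfolding pair[symmetric] by simp
    moreover have "col c = col k \<or> col c = cnj (col k) \<Longrightarrow> c \<in> {k1, k2}"
      using \<open>c < degree f\<close> unfolding pair[symmetric] by simp
    ultimately show ?thesis using blocks by auto
  qed
qed

lemma vdm_columns_Re_Im_combination:
  fixes col :: "nat \<Rightarrow> complex" and part :: "nat \<Rightarrow> bool"
  assumes vc: "vdm_columns f n col part" and "k0 < degree f"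
  obtains a where "\<forall>k. a k \<noteq> 0 \<longrightarrow> k < degree f \<and> (k < n \<longleftrightarrow> k0 < n)"
    and "\<And>i. (\<Sum>k<degree f. vdm_matrix col part i k * a k) = Re (col k0 ^ i) + s * Im (col k0 ^ i)"
proof -
  have root: "poly (map_poly of_int f) (col k0) = 0"
    using vc \<open>k0 < degree f\<close> by (rule vdm_columns_root)
  show ?thesis
  proof (cases "Im (col k0) = 0")
    case True
    have "\<not> part k0"
      using conjunct1[OF conjunct2[OF vc[unfolded vdm_columns_def]]] root True \<open>k0 < degree f\<close>
      by blast
    have "(\<Sum>k<degree f. vdm_matrix col part i k * (if k = k0 then 1 else 0))
        = (\<Sum>k<degree f. if k = k0 then vdm_matrix col part i k else 0)" for i
      by (intro sum.cong) auto
    also have "\<dots> i = Re (col k0 ^ i) + s * Im (col k0 ^ i)" for i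
      using \<open>k0 < degree f\<close> \<open>\<not> part k0\<close> True by (simp add: vdm_matrix_def)
    finally have "(\<Sum>k<degree f. vdm_matrix col part i k * (if k = k0 then 1 else 0))
        = Re (col k0 ^ i) + s * Im (col k0 ^ i)" for i .
    then show ?thesis
      using \<open>k0 < degree f\<close> by (intro that[of "\<lambda>k. if k = k0 then 1 else 0"]) auto
  next
    case False
    then obtain k1 k2 where k12: "k1 < degree f" "k2 < degree f" "k1 \<noteq> k2"
      and pair: "{j. j < degree f \<and> (col j = col k0 \<or> col j = cnj (col k0))} = {k1, k2}"
      and "col k1 = col k2" "part k1 \<noteq> part k2" "k1 < n \<longleftrightarrow> k2 < n"
      using conjunct2[OF conjunct2[OF vc[unfolded vdm_columns_def]]] root by blast
    have "k0 \<in> {k1, k2}"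
      using \<open>k0 < degree f\<close> unfolding pair[symmetric] by simp
    then have "col k1 = col k0" "col k2 = col k0" "k1 < n \<longleftrightarrow> k0 < n" "k2 < n \<longleftrightarrow> k0 < n"
      using \<open>col k1 = col k2\<close> \<open>k1 < n \<longleftrightarrow> k2 < n\<close> by auto
    define kre where "kre = (if part k1 then k2 else k1)"
    define kim where "kim = (if part k1 then k1 else k2)"
    have kk: "kre < degree f" "kim < degree f" "kre \<noteq> kim"
      "\<not> part kre" "part kim" "col kre = col k0" "col kim = col k0"
      "kre < n \<longleftrightarrow> k0 < n" "kim < n \<longleftrightarrow> k0 < n"
      unfolding kre_def kim_def using k12 \<open>col k1 = col k0\<close> \<open>col k2 = col k0\<close>
        \<open>k1 < n \<longleftrightarrow> k0 < n\<close> \<open>k2 < n \<longleftrightarrow> k0 < n\<close> \<open>part k1 \<noteq> part k2\<close> by auto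
    define a where "a k = (if k = kre then 1 else 0) + (if k = kim then s else 0)" for k
    have "(\<Sum>k<degree f. vdm_matrix col part i k * a k)
        = (\<Sum>k<degree f. (if k = kre then vdm_matrix col part i k else 0)
            + (if k = kim then s * vdm_matrix col part i k else 0))" for i
      by (rule sum.cong[OF refl]) (simp add: a_def algebra_simps)
    also have "\<dots> i = Re (col k0 ^ i) + s * Im (col k0 ^ i)" for i
      using kk by (simp add: sum.distrib vdm_matrix_def)
    finally show ?thesis
      using kk by (intro that[of a]) (auto simp: a_def)
  qed
qed

lemma int_independent_Re_plus_Im:
  fixes w :: "nat \<Rightarrow> complex"
  assumes indep: "int_independent m w"
  obtains s where "int_independent m (\<lambda>i. Re (w i) + s * Im (w i))"
proof -
  define W where "W q = (\<Sum>i<m. of_int (q i) * w i)" for q :: "nat \<Rightarrow> int"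
  \<comment> \<open>Integer relations are indexed by their coefficient lists, so only countably many s are bad.\<close>
  define B where "B = range (\<lambda>xs :: int list. - Re (W ((!) xs)) / Im (W ((!) xs)))"
  have "countable B" unfolding B_def by simp
  then obtain s where s: "s \<notin> B"
    using uncountable_UNIV_real by (metis UNIV_eq_I)
  have "\<forall>i<m. q i = 0" if rel: "(\<Sum>i<m. of_int (q i) * (Re (w i) + s * Im (w i))) = 0" for q
  proof (cases "W q = 0")
    case True
    then show ?thesis using indep unfolding W_def int_independent_def by blast
  next
    case False
    have "Re (W q) + s * Im (W q) = 0"
      using rel by (simp add: W_def Re_sum Im_sum sum.distrib sum_distrib_left algebra_simps)
    moreover from this False have "Im (W q) \<noteq> 0"
      by (auto simp: complex_eq_iff)
    ultimately have "s = - Re (W q) / Im (W q)"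
      by (simp add: field_simps)
    moreover have "W ((!) (map q [0..<m])) = W q"
      unfolding W_def by (intro sum.cong) auto
    ultimately have "s \<in> B"
      unfolding B_def by (intro image_eqI[where x = "map q [0..<m]"]) simp_all
    with s show ?thesis by blast
  qed
  then show ?thesis
    by (intro that[of s]) (simp add: int_independent_def)
qed

lemma int_independent_imp_inj_on:
  fixes \<theta> :: "nat \<Rightarrow> 'a :: ring_1"
  assumes "int_independent m \<theta>"
  shows "inj_on \<theta> {..<m}"
proof (rule inj_onI, rule ccontr)
  fix i j assume "i \<in> {..<m}" "j \<in> {..<m}" "\<theta> i = \<theta> j" "i \<noteq> j"
  define q :: "nat \<Rightarrow> int" where "q k = (if k = i then 1 else 0) - (if k = j then 1 else 0)" for k
  have "(\<Sum>k<m. of_int (q k) * \<theta> k)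
      = (\<Sum>k<m. if k = i then \<theta> k else 0) - (\<Sum>k<m. if k = j then \<theta> k else 0)"
    unfolding sum_subtractf[symmetric] by (intro sum.cong) (auto simp: q_def)
  also have "\<dots> = 0"
    using \<open>i \<in> {..<m}\<close> \<open>j \<in> {..<m}\<close> \<open>\<theta> i = \<theta> j\<close> by simp
  finally have "q i = 0"
    using assms \<open>i \<in> {..<m}\<close> unfolding int_independent_def by blast
  then show False
    using \<open>i \<noteq> j\<close> by (simp add: q_def)
qed

lemma int_independent_imp_module_independent:
  fixes \<theta> :: "nat \<Rightarrow> real"
  assumes "int_independent m \<theta>"
  shows "module.independent (\<lambda>r. (*) (real_of_int r)) (\<theta> ` {..<m})"
proof -
  interpret Z: Modules.module "\<lambda>r. (*) (real_of_int r)"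
    by (simp add: Modules.module.intro distrib_left mult.commute)
  show ?thesis
  proof
    assume "Z.dependent (\<theta> ` {..<m})"
    then obtain T u where T: "finite T" "T \<subseteq> \<theta> ` {..<m}"
      and rel: "(\<Sum>v\<in>T. real_of_int (u v) * v) = 0" and "\<exists>v\<in>T. u v \<noteq> 0"
      unfolding Z.dependent_explicit by blast
    define I where "I = {k. k < m \<and> \<theta> k \<in> T}"
    have T_eq: "T = \<theta> ` I"
      using T(2) unfolding I_def by auto
    have "inj_on \<theta> I"
      using int_independent_imp_inj_on[OF assms] unfolding I_def by (rule inj_on_subset) auto
    define q where "q k = (if \<theta> k \<in> T then u (\<theta> k) else 0)" for k
    have "(\<Sum>k<m. of_int (q k) * \<theta> k) = (\<Sum>k\<in>I. real_of_int (u (\<theta> k)) * \<theta> k)"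
      unfolding q_def I_def by (rule sum.mono_neutral_cong_right) auto
    also have "\<dots> = 0"
      using rel \<open>inj_on \<theta> I\<close> unfolding T_eq by (simp add: sum.reindex)
    finally have "\<forall>k<m. q k = 0"
      using assms unfolding int_independent_def by blast
    moreover obtain v where "v \<in> T" "u v \<noteq> 0"
      using \<open>\<exists>v\<in>T. u v \<noteq> 0\<close> by blast
    moreover obtain k where "k < m" "v = \<theta> k"
      using \<open>v \<in> T\<close> T(2) by blast
    ultimately show False
      by (auto simp: q_def)
  qed
qed

lemma Kronecker_int_independent:
  fixes \<theta> \<alpha> :: "nat \<Rightarrow> real"
  assumes "int_independent m \<theta>" and "\<epsilon> > 0"
  obtains t h where "\<And>i. i < m \<Longrightarrow> \<bar>t * \<theta> i - of_int (h i) - \<alpha> i\<bar> < \<epsilon>"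
  using Kronecker_thm_1[OF int_independent_imp_module_independent int_independent_imp_inj_on]
    assms by blast

lemma linear_map_small_on_small_vectors:
  fixes A :: "nat \<Rightarrow> nat \<Rightarrow> real"
  assumes "\<epsilon> > 0"
  obtains \<delta> where "\<delta> > 0"
    and "\<And>e. (\<forall>k<d. \<bar>e k\<bar> < \<delta>) \<Longrightarrow> sqrt (\<Sum>i<m. (\<Sum>k<d. A i k * e k)\<^sup>2) < \<epsilon>"
proof
  define M where "M = (\<Sum>i<m. \<Sum>k<d. \<bar>A i k\<bar>)"
  have "M \<ge> 0" unfolding M_def by (intro sum_nonneg) auto
  show "\<epsilon> / (M + 1) > 0"
    using \<open>M \<ge> 0\<close> \<open>\<epsilon> > 0\<close> by simp
  fix e assume small: "\<forall>k<d. \<bar>e k\<bar> < \<epsilon> / (M + 1)"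
  have "sqrt (\<Sum>i<m. (\<Sum>k<d. A i k * e k)\<^sup>2) \<le> (\<Sum>i<m. \<bar>\<Sum>k<d. A i k * e k\<bar>)"
    using L2_set_le_sum_abs[of "\<lambda>i. \<Sum>k<d. A i k * e k" "{..<m}"] by (simp add: L2_set_def)
  also have "\<dots> \<le> (\<Sum>i<m. \<Sum>k<d. \<bar>A i k\<bar> * (\<epsilon> / (M + 1)))"
  proof (intro sum_mono)
    fix i
    have "\<bar>\<Sum>k<d. A i k * e k\<bar> \<le> (\<Sum>k<d. \<bar>A i k\<bar> * \<bar>e k\<bar>)"
      unfolding abs_mult[symmetric] by (rule sum_abs)
    also have "\<dots> \<le> (\<Sum>k<d. \<bar>A i k\<bar> * (\<epsilon> / (M + 1)))"
      using small by (intro sum_mono mult_left_mono) auto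
    finally show "\<bar>\<Sum>k<d. A i k * e k\<bar> \<le> (\<Sum>k<d. \<bar>A i k\<bar> * (\<epsilon> / (M + 1)))" .
  qed
  also have "\<dots> = M * (\<epsilon> / (M + 1))"
    unfolding M_def by (simp only: sum_distrib_right)
  also have "\<dots> < \<epsilon>"
    using \<open>M \<ge> 0\<close> \<open>\<epsilon> > 0\<close> by (simp add: field_simps)
  finally show "sqrt (\<Sum>i<m. (\<Sum>k<d. A i k * e k)\<^sup>2) < \<epsilon>" .
qed

lemma approx_block_by_int_combination:
  fixes L Y :: "nat \<Rightarrow> nat \<Rightarrow> real" and \<theta> a y :: "nat \<Rightarrow> real"
  assumes LY: "\<forall>i<d. \<forall>j<d. (\<Sum>k<d. L i k * Y k j) = (if i = j then 1 else 0)"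
    and \<theta>: "\<forall>i<d. \<theta> i = (\<Sum>k<d. Y i k * a k)"
    and a: "\<forall>k. n \<le> k \<longrightarrow> a k = 0"
    and indep: "int_independent d \<theta>"
    and "\<epsilon> > 0"
  obtains r :: "nat \<Rightarrow> int"
  where "sqrt (\<Sum>i<d - n. ((\<Sum>k<d. L (n + i) k * of_int (r k)) - y i)\<^sup>2) < \<epsilon>"
proof -
  obtain \<delta> where "\<delta> > 0" and \<delta>:
    "\<And>e. (\<forall>k<d. \<bar>e k\<bar> < \<delta>) \<Longrightarrow> sqrt (\<Sum>i<d - n. (\<Sum>k<d. L (n + i) k * e k)\<^sup>2) < \<epsilon>"
    using linear_map_small_on_small_vectors[OF \<open>\<epsilon> > 0\<close>, where A = "\<lambda>i. L (n + i)" and d = d and m = "d - n"]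
    by blast
  define w where "w l = (if n \<le> l then y (l - n) else 0)" for l
  define p where "p k = (\<Sum>l<d. Y k l * w l)" for k
  obtain t h where th: "\<And>k. k < d \<Longrightarrow> \<bar>t * \<theta> k - of_int (h k) - (- p k)\<bar> < \<delta>"
    using Kronecker_int_independent[OF indep \<open>\<delta> > 0\<close>, where \<alpha> = "\<lambda>k. - p k"] by blast
  define e where "e k = of_int (h k) - p k - t * \<theta> k" for k
  have err: "(\<Sum>k<d. L (n + i) k * of_int (h k)) - y i = (\<Sum>k<d. L (n + i) k * e k)"
    if "i < d - n" for i
  proof -
    have j: "n + i < d" using that by simp
    have "(\<Sum>k<d. L (n + i) k * of_int (h k))
        = (\<Sum>k<d. L (n + i) k * p k + t * (L (n + i) k * \<theta> k) + L (n + i) k * e k)"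
      by (rule sum.cong[OF refl]) (simp add: e_def algebra_simps)
    also have "\<dots> = (\<Sum>k<d. L (n + i) k * p k) + t * (\<Sum>k<d. L (n + i) k * \<theta> k)
        + (\<Sum>k<d. L (n + i) k * e k)"
      by (simp add: sum.distrib sum_distrib_left)
    also have "(\<Sum>k<d. L (n + i) k * p k) = w (n + i)"
      unfolding p_def by (rule matrix_inverse_apply[OF LY j])
    also have "(\<Sum>k<d. L (n + i) k * \<theta> k) = (\<Sum>k<d. L (n + i) k * (\<Sum>l<d. Y k l * a l))"
      using \<theta> by (intro sum.cong) auto
    also have "\<dots> = a (n + i)"
      by (rule matrix_inverse_apply[OF LY j])
    finally show ?thesis using a by (simp add: w_def)
  qed
  have "\<forall>k<d. \<bar>e k\<bar> < \<delta>"
    using th by (simp add: e_def abs_minus_commute algebra_simps)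
  then have "sqrt (\<Sum>i<d - n. (\<Sum>k<d. L (n + i) k * e k)\<^sup>2) < \<epsilon>"
    by (rule \<delta>)
  then show ?thesis
    using err by (intro that[of h]) simp
qed

locale vandermonde_cps =
  fixes f :: "int poly" and n :: nat
    and col :: "nat \<Rightarrow> complex" and part :: "nat \<Rightarrow> bool"
    and L :: "nat \<Rightarrow> nat \<Rightarrow> real"
  assumes irreducible: "irreducible (map_poly (of_int :: int \<Rightarrow> rat) f)"
    and n_pos: "1 \<le> n" and n_less_degree: "n < degree f"
    and columns: "vdm_columns f n col part"
    and left_inverse: "\<forall>i < degree f. \<forall>j < degree f.
           (\<Sum>k < degree f. L i k * vdm_matrix col part k j) = (if i = j then 1 else 0)"
    and right_inverse: "\<forall>i < degree f. \<forall>j < degree f.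
           (\<Sum>k < degree f. vdm_matrix col part i k * L k j) = (if i = j then 1 else 0)"
begin

lemma int_vector_eq_0_if_L_vanishes_on_block:
  fixes \<sigma> :: "nat \<Rightarrow> int"
  assumes "k0 < degree f"
    and vanish: "\<forall>i<degree f. (i < n \<longleftrightarrow> k0 < n) \<longrightarrow> (\<Sum>k<degree f. L i k * of_int (\<sigma> k)) = 0"
  shows "\<forall>i<degree f. \<sigma> i = 0"
proof -
  define u where "u i = (\<Sum>k<degree f. L i k * of_int (\<sigma> k))" for i
  define C where "C = {c. c < degree f \<and> (c < n) \<noteq> (k0 < n)}"
  have "\<forall>i<degree f. of_int (\<sigma> i) = (\<Sum>c\<in>C. vdm_matrix col part i c * u c)"
  proof (intro allI impI)
    fix i assume "i < degree f"
    then have "of_int (\<sigma> i) = (\<Sum>c<degree f. vdm_matrix col part i c * u c)"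
      unfolding u_def by (rule matrix_inverse_apply[OF right_inverse, symmetric])
    also have "\<dots> = (\<Sum>c\<in>C. vdm_matrix col part i c * u c)"
      using vanish by (intro sum.mono_neutral_right) (auto simp: C_def u_def)
    finally show "of_int (\<sigma> i) = (\<Sum>c\<in>C. vdm_matrix col part i c * u c)" .
  qed
  moreover have "\<forall>c\<in>C. poly (map_poly of_int f) (col c) = 0 \<and> col c \<noteq> col k0 \<and> cnj (col c) \<noteq> col k0"
  proof
    fix c assume "c \<in> C"
    then have "c < degree f" "(k0 < n) \<noteq> (c < n)" by (auto simp: C_def)
    then show "poly (map_poly of_int f) (col c) = 0 \<and> col c \<noteq> col k0 \<and> cnj (col c) \<noteq> col k0"
      using vdm_columns_root[OF columns] vdm_columns_other_block[OF columns \<open>k0 < degree f\<close>]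
      by (metis complex_cnj_cnj)
  qed
  ultimately show ?thesis
    by (intro int_vector_in_span_of_vdm_columns_eq_0[OF irreducible])
      (use vdm_columns_root[OF columns \<open>k0 < degree f\<close>] in blast)+
qed

lemma cps_lattice_eq_if_eq_on_block:
  assumes x: "x \<in> cps_lattice (degree f) L" and x': "x' \<in> cps_lattice (degree f) L"
    and "k0 < degree f"
    and eq: "\<forall>i<degree f. (i < n \<longleftrightarrow> k0 < n) \<longrightarrow> x i = x' i"
  shows "x = x'"
proof -
  obtain r r' :: "nat \<Rightarrow> int" where
    r: "x = (\<lambda>i. if i < degree f then (\<Sum>k<degree f. L i k * of_int (r k)) else 0)" and
    r': "x' = (\<lambda>i. if i < degree f then (\<Sum>k<degree f. L i k * of_int (r' k)) else 0)"
    using x x' unfolding cps_lattice_def by blast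
  have diff: "(\<Sum>k<degree f. L i k * of_int (r k - r' k)) = x i - x' i" if "i < degree f" for i
    using that by (simp add: r r' sum_subtractf right_diff_distrib)
  then have "\<forall>i<degree f. r i - r' i = 0"
    using eq by (intro int_vector_eq_0_if_L_vanishes_on_block[OF \<open>k0 < degree f\<close>]) simp
  then have "x i = x' i" if "i < degree f" for i
    using diff[OF that] by simp
  moreover have "x i = x' i" if "\<not> i < degree f" for i
    using that by (simp add: r r')
  ultimately show ?thesis
    by blast
qed

lemma inj_on_pi_par: "inj_on (pi_par n) (cps_lattice (degree f) L)"
proof (rule inj_onI)
  fix x x' assume x: "x \<in> cps_lattice (degree f) L" and x': "x' \<in> cps_lattice (degree f) L"
    and par: "pi_par n x = pi_par n x'"
  have "x i = x' i" if "i < n" for i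
    using fun_cong[OF par, of i] that by (simp add: pi_par_def)
  then show "x = x'"
    using n_pos n_less_degree by (intro cps_lattice_eq_if_eq_on_block[OF x x', of 0]) auto
qed

lemma inj_on_pi_perp: "inj_on (pi_perp (degree f) n) (cps_lattice (degree f) L)"
proof (rule inj_onI)
  fix x x' assume x: "x \<in> cps_lattice (degree f) L" and x': "x' \<in> cps_lattice (degree f) L"
    and perp: "pi_perp (degree f) n x = pi_perp (degree f) n x'"
  have "x i = x' i" if "n \<le> i" "i < degree f" for i
  proof -
    have "i - n < degree f - n" "n + (i - n) = i" using that by auto
    then show ?thesis using fun_cong[OF perp, of "i - n"] by (simp add: pi_perp_def)
  qed
  then show "x = x'"
    using n_less_degree by (intro cps_lattice_eq_if_eq_on_block[OF x x', of n]) auto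
qed

lemma pi_perp_cps_lattice_dense:
  "\<forall>y :: nat \<Rightarrow> real. \<forall>\<epsilon> > 0. \<exists>x \<in> cps_lattice (degree f) L.
     sqrt (\<Sum>i < degree f - n. (pi_perp (degree f) n x i - y i)\<^sup>2) < \<epsilon>"
proof (intro allI impI)
  fix y :: "nat \<Rightarrow> real" and \<epsilon> :: real
  assume "\<epsilon> > 0"
  have "0 < degree f" using n_less_degree by simp
  then have root: "poly (map_poly of_int f) (col 0) = 0"
    by (rule vdm_columns_root[OF columns])
  obtain s where s: "int_independent (degree f) (\<lambda>i. Re (col 0 ^ i) + s * Im (col 0 ^ i))"
    using int_independent_Re_plus_Im[OF int_independent_powers_of_root[OF irreducible root]] .
  obtain a where a: "\<forall>k. a k \<noteq> 0 \<longrightarrow> k < degree f \<and> (k < n \<longleftrightarrow> 0 < n)"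
    and comb: "\<And>i. (\<Sum>k<degree f. vdm_matrix col part i k * a k) = Re (col 0 ^ i) + s * Im (col 0 ^ i)"
    using vdm_columns_Re_Im_combination[OF columns \<open>0 < degree f\<close>] by blast
  have "\<forall>k. n \<le> k \<longrightarrow> a k = 0"
    using a n_pos by fastforce
  moreover have "\<forall>i<degree f. Re (col 0 ^ i) + s * Im (col 0 ^ i)
      = (\<Sum>k<degree f. vdm_matrix col part i k * a k)"
    using comb by simp
  ultimately obtain r :: "nat \<Rightarrow> int" where
    r: "sqrt (\<Sum>i<degree f - n. ((\<Sum>k<degree f. L (n + i) k * of_int (r k)) - y i)\<^sup>2) < \<epsilon>"
    using approx_block_by_int_combination[OF left_inverse _ _ s \<open>\<epsilon> > 0\<close>] by blast
  define x where "x i = (if i < degree f then (\<Sum>k<degree f. L i k * of_int (r k)) else 0)" for i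
  have "x \<in> cps_lattice (degree f) L"
    unfolding cps_lattice_def x_def by blast
  moreover have "(\<Sum>i<degree f - n. (pi_perp (degree f) n x i - y i)\<^sup>2)
      = (\<Sum>i<degree f - n. ((\<Sum>k<degree f. L (n + i) k * of_int (r k)) - y i)\<^sup>2)"
    by (intro sum.cong) (simp_all add: pi_perp_def x_def)
  ultimately show "\<exists>x \<in> cps_lattice (degree f) L.
      sqrt (\<Sum>i<degree f - n. (pi_perp (degree f) n x i - y i)\<^sup>2) < \<epsilon>"
    using r by (intro bexI[of _ x]) simp_all
qed

end

theorem theorem1:
  fixes f :: "int poly" and n :: nat
    and col :: "nat \<Rightarrow> complex" and part :: "nat \<Rightarrow> bool"
    and L :: "nat \<Rightarrow> nat \<Rightarrow> real"
  assumes "lead_coeff f = 1"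
    and "irreducible (map_poly (of_int :: int \<Rightarrow> rat) f)"
    and "1 \<le> n" and "n < degree f"
    and "vdm_columns f n col part"
    and "\<forall>i < degree f. \<forall>j < degree f.
           (\<Sum>k < degree f. L i k * vdm_matrix col part k j) = (if i = j then 1 else 0)"
    and "\<forall>i < degree f. \<forall>j < degree f.
           (\<Sum>k < degree f. vdm_matrix col part i k * L k j) = (if i = j then 1 else 0)"
  shows "generic_cps (degree f) n L"
proof -
  interpret vandermonde_cps f n col part L
    using assms(2-7) by (rule vandermonde_cps.intro)
  show ?thesis
    unfolding generic_cps_def
    using inj_on_pi_par inj_on_pi_perp pi_perp_cps_lattice_dense by blast
qed

end
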